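(* Let $\mathcal{P}$ be a profile of unrooted phylogenetic trees whose display graph $G(\mathcal{P})$ is connected. Let $F$ be a nice minimal cut of $G(\mathcal{P})$ and let $G_1,G_2$ be the two connected components of $G(\mathcal{P})-F$. Then $\mathcal{L}(G_1)|\mathcal{L}(G_2)$ is a split of $\mathcal{L}(\mathcal{P})$, where $\mathcal{L}(G_i)$ denotes the set of leaves (elements of $\mathcal{L}(\mathcal{P})$) in $G_i$.
   Context: A phylogenetic tree $T$ is an unrooted tree whose leaves are bijectively labeled by $\mathcal{L}(T)$ (leaves identified with labels; internal vertices have degree at least three). A profile $\mathcal{P}=\{T_1,\dots,T_k\}$ is a finite collection of phylogenetic trees, $\mathcal{L}(\mathcal{P})=\bigcup_i\mathcal{L}(T_i)$; internal vertices of distinct trees are disjoint, while leaves with the same label are the same vertex. The display graph $G(\mathcal{P})$ has vertex set $\bigcup_i V(T_i)$ and edge set $\bigcup_i E(T_i)$. For a vertex $u$ of an input tree, $\mathrm{Inc}(u)$ is the set of edges of $G(\mathcal{P})$ incident with $u$. A split of a set $L$ is a bipartition of $L$ into two nonempty sets. A cut of a connected graph $G$ is $F\subseteq E(G)$ with $G-F$ disconnected; minimal if no proper subset is a cut (then $G-F$ has exactly two components). A cut $F$ of $G(\mathcal{P})$ is legal if for every $T\in\mathcal{P}$ there is $u\in V(T)$ with $F\cap E(T)\subseteq\mathrm{Inc}(u)$; nice if legal and every component of $G(\mathcal{P})-F$ contains at least one edge. *)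

theory Defs
  imports Main
begin

text \<open>Undirected graphs are pairs (V, E) with E a set of 2-element subsets of V.
A (phylogenetic) tree is such a pair; its leaves (= labels) are its vertices of degree at most 1.\<close>

type_synonym 'v graph = "'v set \<times> 'v set set"

definition verts :: "'v graph \<Rightarrow> 'v set" where "verts G = fst G"
definition edges :: "'v graph \<Rightarrow> 'v set set" where "edges G = snd G"

definition adj :: "'v set set \<Rightarrow> ('v \<times> 'v) set" where
  "adj E = {(u, v). {u, v} \<in> E \<and> u \<noteq> v}"

definition wf_graph :: "'v set \<Rightarrow> 'v set set \<Rightarrow> bool" where
  "wf_graph V E \<longleftrightarrow> (\<forall>e\<in>E. \<exists>u v. u \<noteq> v \<and> e = {u, v} \<and> u \<in> V \<and> v \<in> V)"

definition connected_graph :: "'v set \<Rightarrow> 'v set set \<Rightarrow> bool" where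
  "connected_graph V E \<longleftrightarrow> V \<noteq> {} \<and> (\<forall>u\<in>V. \<forall>v\<in>V. (u, v) \<in> (adj E)\<^sup>*)"

text \<open>A tree: finite, connected, and acyclic (every edge is a bridge).\<close>
definition is_tree :: "'v set \<Rightarrow> 'v set set \<Rightarrow> bool" where
  "is_tree V E \<longleftrightarrow> finite V \<and> wf_graph V E \<and> connected_graph V E \<and>
     (\<forall>e\<in>E. \<not> connected_graph V (E - {e}))"

definition degree :: "'v set set \<Rightarrow> 'v \<Rightarrow> nat" where
  "degree E v = card {e \<in> E. v \<in> e}"

definition leaves :: "'v graph \<Rightarrow> 'v set" where
  "leaves T = {v \<in> verts T. degree (edges T) v \<le> 1}"

text \<open>Unrooted phylogenetic tree: leaves identified with their labels; internal
vertices have degree at least three.\<close>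
definition phylo_tree :: "'v graph \<Rightarrow> bool" where
  "phylo_tree T \<longleftrightarrow> is_tree (verts T) (edges T) \<and>
     (\<forall>v\<in>verts T - leaves T. degree (edges T) v \<ge> 3)"

definition profile :: "'v graph set \<Rightarrow> bool" where
  "profile P \<longleftrightarrow> finite P \<and> (\<forall>T\<in>P. phylo_tree T) \<and>
     (\<forall>T\<in>P. \<forall>T'\<in>P. T \<noteq> T' \<longrightarrow> verts T \<inter> verts T' \<subseteq> leaves T \<inter> leaves T')"

definition labels :: "'v graph set \<Rightarrow> 'v set" where
  "labels P = (\<Union>T\<in>P. leaves T)"

definition display_graph :: "'v graph set \<Rightarrow> 'v graph" where
  "display_graph P = ((\<Union>T\<in>P. verts T), (\<Union>T\<in>P. edges T))"

definition Inc :: "'v graph set \<Rightarrow> 'v \<Rightarrow> 'v set set" where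
  "Inc P u = {e \<in> edges (display_graph P). u \<in> e}"

definition is_cut :: "'v graph \<Rightarrow> 'v set set \<Rightarrow> bool" where
  "is_cut G F \<longleftrightarrow> F \<subseteq> edges G \<and> \<not> connected_graph (verts G) (edges G - F)"

definition minimal_cut :: "'v graph \<Rightarrow> 'v set set \<Rightarrow> bool" where
  "minimal_cut G F \<longleftrightarrow> is_cut G F \<and> (\<forall>F'. F' \<subset> F \<longrightarrow> \<not> is_cut G F')"

definition component :: "'v set \<Rightarrow> 'v set set \<Rightarrow> 'v set \<Rightarrow> bool" where
  "component V E C \<longleftrightarrow> (\<exists>v\<in>V. C = {u \<in> V. (v, u) \<in> (adj E)\<^sup>*})"

definition legal_cut :: "'v graph set \<Rightarrow> 'v set set \<Rightarrow> bool" where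
  "legal_cut P F \<longleftrightarrow> is_cut (display_graph P) F \<and>
     (\<forall>T\<in>P. \<exists>u\<in>verts T. F \<inter> edges T \<subseteq> Inc P u)"

definition nice_cut :: "'v graph set \<Rightarrow> 'v set set \<Rightarrow> bool" where
  "nice_cut P F \<longleftrightarrow> legal_cut P F \<and>
     (\<forall>C. component (verts (display_graph P)) (edges (display_graph P) - F) C \<longrightarrow>
        (\<exists>e \<in> edges (display_graph P) - F. e \<subseteq> C))"

definition is_split :: "'v set \<Rightarrow> 'v set \<Rightarrow> 'v set \<Rightarrow> bool" where
  "is_split L A B \<longleftrightarrow> A \<noteq> {} \<and> B \<noteq> {} \<and> A \<inter> B = {} \<and> A \<union> B = L"

end

theory Submission
  imports Defs
begin

text \<open>Every component of \<open>G(\<P>) - F\<close> contains an edge of some tree \<open>T\<close> not in \<open>F\<close>; since all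
edges of \<open>F \<inter> E(T)\<close> meet in one vertex \<open>u\<close>, the subgraph of \<open>T - F\<close> spanned inside the
component is a nonempty subforest, which has a vertex of degree at most one other than \<open>u\<close>.
That vertex lost at most one edge to the cut, so it cannot be an internal vertex (degree \<open>\<ge> 3\<close>)
and is a leaf. Hence both sides are nonempty. They cover all labels because removing one edge
from a minimal cut reconnects the graph, so every component reaches an endpoint of that edge,
and there are exactly two components.\<close>

definition neighbours :: "'v set set \<Rightarrow> 'v \<Rightarrow> 'v set" where
  "neighbours E w = {x. {w, x} \<in> E \<and> x \<noteq> w}"

fun walk :: "'v set set \<Rightarrow> 'v list \<Rightarrow> bool" where
  "walk E (x # y # xs) \<longleftrightarrow> {x, y} \<in> E \<and> walk E (y # xs)"
| "walk E _ \<longleftrightarrow> True"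

lemma walk_snoc: "walk E (xs @ [y]) \<longleftrightarrow> walk E xs \<and> (xs \<noteq> [] \<longrightarrow> {last xs, y} \<in> E)"
  by (induction E xs rule: walk.induct) auto

lemma walk_rev: "walk E (rev xs) \<longleftrightarrow> walk E xs"
proof (induction xs)
  case (Cons x xs)
  have "walk E (rev (x # xs)) \<longleftrightarrow> walk E xs \<and> (xs \<noteq> [] \<longrightarrow> {hd xs, x} \<in> E)"
    by (simp only: rev.simps walk_snoc Cons.IH) (simp add: last_rev)
  then show ?case by (cases xs) (auto simp: insert_commute)
qed simp

lemma walk_avoiding: "walk E xs \<Longrightarrow> a \<notin> set xs \<Longrightarrow> walk (E - {f. a \<in> f}) xs"
  by (induction E xs rule: walk.induct) auto

lemma walk_set_subset: "walk E (x # y # xs) \<Longrightarrow> set (x # y # xs) \<subseteq> \<Union>E"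
  by (induction xs arbitrary: x y) auto

lemma walk_reach: "walk E xs \<Longrightarrow> y \<in> set xs \<Longrightarrow> (hd xs, y) \<in> (adj E)\<^sup>*"
proof (induction E xs rule: walk.induct)
  case (1 E x z xs)
  show ?case
  proof (cases "y = x \<or> z = x")
    case False
    then have "(z, y) \<in> (adj E)\<^sup>*" "(x, z) \<in> adj E" using 1 by (auto simp: adj_def)
    then show ?thesis by (simp add: converse_rtrancl_into_rtrancl)
  qed (use 1 in auto)
qed auto

lemma reach_sym: "(x, y) \<in> (adj E)\<^sup>* \<Longrightarrow> (y, x) \<in> (adj E)\<^sup>*"
proof -
  have "sym (adj E)" by (auto simp: sym_def adj_def insert_commute)
  then show "(x, y) \<in> (adj E)\<^sup>* \<Longrightarrow> (y, x) \<in> (adj E)\<^sup>*" by (meson sym_rtrancl symD)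
qed

lemma reach_mono:
  assumes "E \<subseteq> E'" "(x, y) \<in> (adj E)\<^sup>*"
  shows "(x, y) \<in> (adj E')\<^sup>*"
proof -
  have "adj E \<subseteq> adj E'" using assms(1) by (auto simp: adj_def)
  then show ?thesis using assms(2) rtrancl_mono by blast
qed

lemma reach_insert_edge:
  assumes "(x, y) \<in> (adj (insert {a, b} E))\<^sup>*"
  shows "(x, y) \<in> (adj E)\<^sup>* \<or> (x, a) \<in> (adj E)\<^sup>* \<or> (x, b) \<in> (adj E)\<^sup>*"
  using assms
proof induct
  case (step y z)
  then have "{y, z} = {a, b} \<or> (y, z) \<in> adj E" by (auto simp: adj_def)
  then show ?case using step(3) by (auto simp: doubleton_eq_iff intro: rtrancl_into_rtrancl)
qed simp

lemma connected_graph_Diff_edge: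
  assumes conn: "connected_graph V E" and ab: "(a, b) \<in> (adj (E - {{a, b}}))\<^sup>*"
  shows "connected_graph V (E - {{a, b}})"
  unfolding connected_graph_def
proof (intro conjI ballI)
  show "V \<noteq> {}" using conn by (simp add: connected_graph_def)
  fix x y assume "x \<in> V" "y \<in> V"
  then have "(x, y) \<in> (adj E)\<^sup>*" using conn by (simp add: connected_graph_def)
  then show "(x, y) \<in> (adj (E - {{a, b}}))\<^sup>*"
  proof induct
    case (step y z)
    then have "{y, z} = {a, b} \<or> (y, z) \<in> adj (E - {{a, b}})" by (auto simp: adj_def)
    then show ?case using step(3) ab reach_sym[OF ab]
      by (auto simp: doubleton_eq_iff intro: rtrancl_trans rtrancl_into_rtrancl)
  qed simp
qed

lemma wf_graph_edge_at:
  assumes "wf_graph V E" "f \<in> E" "w \<in> f"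
  obtains x where "f = {w, x}" "x \<noteq> w" "x \<in> V"
  using assms unfolding wf_graph_def by (metis doubleton_eq_iff insertE singletonD)

lemma wf_graph_Union_subset: "wf_graph V E \<Longrightarrow> \<Union>E \<subseteq> V"
  unfolding wf_graph_def by auto

lemma component_eq_reach:
  assumes "component V E C" "x \<in> C"
  shows "C = {y \<in> V. (x, y) \<in> (adj E)\<^sup>*}"
proof -
  obtain v where v: "v \<in> V" "C = {u \<in> V. (v, u) \<in> (adj E)\<^sup>*}"
    using assms(1) by (auto simp: component_def)
  then have "(v, x) \<in> (adj E)\<^sup>*" "(x, v) \<in> (adj E)\<^sup>*" using assms(2) reach_sym by auto
  then show ?thesis using v by (auto intro: rtrancl_trans)
qed

lemma component_unique:
  "component V E C \<Longrightarrow> component V E C' \<Longrightarrow> x \<in> C \<Longrightarrow> x \<in> C' \<Longrightarrow> C = C'"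
  using component_eq_reach by metis

lemma component_of: "v \<in> V \<Longrightarrow> component V E {w \<in> V. (v, w) \<in> (adj E)\<^sup>*}"
  by (auto simp: component_def)

lemma component_closed:
  assumes "component V E C" "{x, y} \<in> E" "x \<in> C" "y \<in> V"
  shows "y \<in> C"
proof -
  have "(x, y) \<in> (adj E)\<^sup>*" using assms(2) by (cases "x = y") (auto simp: adj_def)
  then show ?thesis using component_eq_reach[OF assms(1,3)] assms(4) by blast
qed

text \<open>Putting back one edge \<open>{a, b}\<close> of \<open>F\<close> reconnects the graph, so every component of
\<open>G - F\<close> contains \<open>a\<close> or \<open>b\<close>.\<close>
lemma minimal_cut_at_most_two_components:
  assumes conn: "connected_graph V E" and wf: "wf_graph V E" and mc: "minimal_cut (V, E) F"
    and C1: "component V (E - F) C1" and C2: "component V (E - F) C2"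
    and C3: "component V (E - F) C3" and "C1 \<noteq> C2"
  shows "C3 = C1 \<or> C3 = C2"
proof -
  have cut: "F \<subseteq> E" "\<not> connected_graph V (E - F)"
    using mc by (auto simp: minimal_cut_def is_cut_def edges_def verts_def)
  then have "F \<noteq> {}" using conn by auto
  then obtain e where e: "e \<in> F" by blast
  then have "e \<in> E" using cut by blast
  then obtain a b where "e = {a, b}" "a \<in> V" "b \<in> V"
    using wf unfolding wf_graph_def by blast
  with e have ab: "{a, b} \<in> F" "a \<in> V" "b \<in> V" by simp_all
  have "\<not> is_cut (V, E) (F - {{a, b}})" using mc ab by (auto simp: minimal_cut_def)
  moreover have "E - (F - {{a, b}}) = insert {a, b} (E - F)" using ab cut by auto
  ultimately have reconnected: "connected_graph V (insert {a, b} (E - F))"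
    using cut by (auto simp: is_cut_def edges_def verts_def)
  have endpoint: "a \<in> C \<or> b \<in> C" if C: "component V (E - F) C" for C
  proof -
    obtain x where x: "x \<in> C" "x \<in> V" using C by (auto simp: component_def)
    then have "(x, a) \<in> (adj (insert {a, b} (E - F)))\<^sup>*"
      using reconnected ab(2) unfolding connected_graph_def by blast
    from reach_insert_edge[OF this]
    have "(x, a) \<in> (adj (E - F))\<^sup>* \<or> (x, b) \<in> (adj (E - F))\<^sup>*" by blast
    then show ?thesis using component_eq_reach[OF C x(1)] ab by blast
  qed
  show ?thesis
    using endpoint[OF C1] endpoint[OF C2] endpoint[OF C3] \<open>C1 \<noteq> C2\<close>
      component_unique[OF C3 C1] component_unique[OF C3 C2] component_unique[OF C1 C2] by blast
qed

text \<open>A longest path in \<open>H\<close> has an end \<open>w\<^sub>0 \<noteq> u\<close>; a second neighbour of \<open>w\<^sub>0\<close> would either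
extend the path or close a cycle through an edge of the tree.\<close>
lemma tree_subgraph_has_leaf_avoiding:
  assumes tree: "is_tree V E" and HE: "H \<subseteq> E" and ab: "{a, b} \<in> H" "a \<noteq> b"
  shows "\<exists>w\<in>\<Union>H. w \<noteq> u \<and> (\<forall>x\<in>neighbours H w. \<forall>y\<in>neighbours H w. x = y)"
proof (rule ccontr)
  assume no_leaf: "\<not> ?thesis"
  have another_neighbour: "\<exists>x\<in>neighbours H w. x \<noteq> y" if w: "w \<in> \<Union>H" "w \<noteq> u" for w y
  proof -
    obtain x1 x2 where "x1 \<in> neighbours H w" "x2 \<in> neighbours H w" "x1 \<noteq> x2"
      using no_leaf w by blast
    then show ?thesis by (cases "x1 = y") auto
  qed
  have fin: "finite V" and conn: "connected_graph V E"
    and bridge: "\<forall>e\<in>E. \<not> connected_graph V (E - {e})"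
    and wf: "wf_graph V E"
    using tree by (auto simp: is_tree_def)
  have HV: "\<Union>H \<subseteq> V" using wf_graph_Union_subset[OF wf] HE by blast
  define S where "S = {p. distinct p \<and> walk H p \<and> 2 \<le> length p}"
  have S_subset: "set p \<subseteq> \<Union>H" if pS: "p \<in> S" for p
  proof -
    obtain x y xs where "p = x # y # xs" using pS by (cases p rule: remdups_adj.cases) (auto simp: S_def)
    then show ?thesis using pS walk_set_subset[of H x y xs] unfolding S_def by blast
  qed
  have "[a, b] \<in> S" using ab by (simp add: S_def)
  moreover have "length p < Suc (card V)" if "p \<in> S" for p
  proof -
    have "distinct p" "set p \<subseteq> V" using that S_subset HV by (auto simp: S_def)
    then show ?thesis using card_mono[OF fin] distinct_card by (metis le_imp_less_Suc)
  qed
  ultimately obtain p where p: "p \<in> S" and longest: "\<And>q. q \<in> S \<Longrightarrow> length q \<le> length p"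
    using ex_has_greatest_nat[of "\<lambda>p. p \<in> S" "[a, b]" length "Suc (card V)"] by blast
  obtain q where q: "q \<in> S" "hd q \<noteq> u" "length q = length p"
  proof (cases "hd p = u")
    case True
    have "last p \<noteq> hd p" using p by (cases p rule: remdups_adj.cases) (auto simp: S_def)
    then have "hd (rev p) \<noteq> u" using True by (simp add: hd_rev)
    moreover have "rev p \<in> S" using p by (simp add: S_def walk_rev)
    ultimately show ?thesis using that by simp
  qed (use p that in blast)
  then obtain w0 w1 rest where "q = w0 # w1 # rest"
    by (cases q rule: remdups_adj.cases) (auto simp: S_def)
  with q have q: "w0 # w1 # rest \<in> S" "w0 \<noteq> u" and ql: "length (w0 # w1 # rest) = length p"
    by simp_all
  have "w0 \<in> \<Union>H" using S_subset[OF q(1)] by simp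
  then obtain x where x: "x \<in> neighbours H w0" "x \<noteq> w1" using another_neighbour q(2) by blast
  show False
  proof (cases "x \<in> set (w0 # w1 # rest)")
    case False
    then have "x # w0 # w1 # rest \<in> S" using q x by (auto simp: S_def neighbours_def insert_commute)
    then show False using longest ql by fastforce
  next
    case True
    then have x_in: "x \<in> set (w1 # rest)" using x by (auto simp: neighbours_def)
    have w: "walk H (w1 # rest)" "{w0, w1} \<in> H" "distinct (w0 # w1 # rest)"
      using q by (auto simp: S_def)
    have "walk (H - {f. w0 \<in> f}) (w1 # rest)" using walk_avoiding[OF w(1)] w(3) by simp
    then have "(w1, x) \<in> (adj (H - {f. w0 \<in> f}))\<^sup>*" using walk_reach[OF _ x_in] by fastforce
    then have "(w1, x) \<in> (adj (E - {{w0, x}}))\<^sup>*" by (rule reach_mono[rotated]) (use HE in auto)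
    moreover have "(w0, w1) \<in> adj (E - {{w0, x}})"
      using w x HE by (auto simp: adj_def doubleton_eq_iff)
    ultimately have "(w0, x) \<in> (adj (E - {{w0, x}}))\<^sup>*" by (simp add: converse_rtrancl_into_rtrancl)
    then have "connected_graph V (E - {{w0, x}})" by (rule connected_graph_Diff_edge[OF conn])
    moreover have "{w0, x} \<in> E" using x HE by (auto simp: neighbours_def)
    ultimately show False using bridge by blast
  qed
qed

text \<open>Of the at least three edges at \<open>w\<close>, only \<open>{w, u}\<close> can lie in \<open>F\<close>.\<close>
lemma two_neighbours_off_cut:
  assumes wf: "wf_graph V E" and deg: "3 \<le> degree E w" and "w \<noteq> u"
    and cut_at_u: "\<And>f. f \<in> F \<Longrightarrow> f \<in> E \<Longrightarrow> w \<in> f \<Longrightarrow> u \<in> f"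
  shows "\<exists>x\<in>neighbours (E - F) w. \<exists>y\<in>neighbours (E - F) w. x \<noteq> y"
proof -
  define A where "A = {f \<in> E. w \<in> f}"
  have "3 \<le> card A" using deg by (simp add: degree_def A_def)
  then have finA: "finite A" using card.infinite by fastforce
  have "A \<subseteq> insert {w, u} (A - F)"
  proof
    fix f assume f: "f \<in> A"
    show "f \<in> insert {w, u} (A - F)"
    proof (cases "f \<in> F")
      case True
      obtain x where "f = {w, x}" using wf f by (auto simp: A_def elim: wf_graph_edge_at)
      then show ?thesis using cut_at_u[OF True] f \<open>w \<noteq> u\<close> by (auto simp: A_def)
    qed (use f in auto)
  qed
  then have "card A \<le> Suc (card (A - F))"
    using finA card_mono[of "insert {w, u} (A - F)" A]
    by (metis card_insert_if finite_Diff finite_insert le_SucI)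
  with \<open>3 \<le> card A\<close> have "2 \<le> card (A - F)" by simp
  then obtain f1 f2 where f: "f1 \<in> A - F" "f2 \<in> A - F" "f1 \<noteq> f2"
    by (metis card_2_iff' card_le_Suc_iff numeral_2_eq_2 insertI1 insert_iff)
  obtain x1 where x1: "f1 = {w, x1}" "x1 \<noteq> w" using wf f(1) by (auto simp: A_def elim: wf_graph_edge_at)
  obtain x2 where x2: "f2 = {w, x2}" "x2 \<noteq> w" using wf f(2) by (auto simp: A_def elim: wf_graph_edge_at)
  show ?thesis using f x1 x2 by (auto simp: A_def neighbours_def)
qed

lemma phylo_tree_closed_set_contains_leaf:
  assumes pt: "phylo_tree T"
    and closed: "\<And>x y. {x, y} \<in> edges T - F \<Longrightarrow> x \<in> C \<Longrightarrow> y \<in> C"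
    and cut_at_u: "\<And>f. f \<in> F \<inter> edges T \<Longrightarrow> u \<in> f"
    and e: "e \<in> edges T - F" "e \<subseteq> C"
  shows "C \<inter> leaves T \<noteq> {}"
proof -
  have tree: "is_tree (verts T) (edges T)"
    and internal: "\<And>v. v \<in> verts T - leaves T \<Longrightarrow> 3 \<le> degree (edges T) v"
    using pt by (auto simp: phylo_tree_def)
  then have wf: "wf_graph (verts T) (edges T)" by (simp add: is_tree_def)
  define H where "H = {f \<in> edges T - F. f \<subseteq> C}"
  obtain a b where "e = {a, b}" "a \<noteq> b" using wf e(1) unfolding wf_graph_def by blast
  with e have "{a, b} \<in> H" by (simp add: H_def)
  moreover have "H \<subseteq> edges T" by (auto simp: H_def)
  ultimately have "\<exists>w\<in>\<Union>H. w \<noteq> u \<and> (\<forall>x\<in>neighbours H w. \<forall>y\<in>neighbours H w. x = y)"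
    using tree_subgraph_has_leaf_avoiding[OF tree _ _ \<open>a \<noteq> b\<close>] by simp
  then obtain w where w: "w \<in> \<Union>H" "w \<noteq> u"
    and single: "\<forall>x\<in>neighbours H w. \<forall>y\<in>neighbours H w. x = y"
    by blast
  have wC: "w \<in> C" "w \<in> verts T"
    using w wf_graph_Union_subset[OF wf] by (auto simp: H_def)
  have "w \<in> leaves T"
  proof (rule ccontr)
    assume "w \<notin> leaves T"
    then obtain x y where "x \<in> neighbours (edges T - F) w" "y \<in> neighbours (edges T - F) w" "x \<noteq> y"
      using two_neighbours_off_cut[OF wf internal w(2), of F] cut_at_u wC by blast
    moreover have "neighbours (edges T - F) w \<subseteq> neighbours H w"
      using closed wC by (auto simp: neighbours_def H_def)
    ultimately show False using single by blast
  qed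
  then show ?thesis using wC by blast
qed

lemma edges_display_graph: "T \<in> P \<Longrightarrow> edges T \<subseteq> edges (display_graph P)"
  by (auto simp: display_graph_def edges_def)

lemma wf_display_graph:
  assumes "profile P"
  shows "wf_graph (verts (display_graph P)) (edges (display_graph P))"
  unfolding wf_graph_def
proof
  fix e assume "e \<in> edges (display_graph P)"
  then obtain T where T: "T \<in> P" "e \<in> edges T" by (auto simp: display_graph_def edges_def)
  then have "wf_graph (verts T) (edges T)"
    using assms by (simp add: profile_def phylo_tree_def is_tree_def)
  then obtain x y where "x \<noteq> y" "e = {x, y}" "x \<in> verts T" "y \<in> verts T"
    using T(2) unfolding wf_graph_def by blast
  moreover have "verts T \<subseteq> verts (display_graph P)" using T(1) by (auto simp: display_graph_def verts_def)
  ultimately show "\<exists>x y. x \<noteq> y \<and> e = {x, y} \<and> x \<in> verts (display_graph P) \<and> y \<in> verts (display_graph P)"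
    by blast
qed

lemma component_contains_label:
  assumes P: "profile P" and nice: "nice_cut P F"
    and C: "component (verts (display_graph P)) (edges (display_graph P) - F) C"
  shows "C \<inter> labels P \<noteq> {}"
proof -
  obtain e where e: "e \<in> edges (display_graph P) - F" "e \<subseteq> C"
    using nice C by (auto simp: nice_cut_def)
  then obtain T where T: "T \<in> P" "e \<in> edges T" by (auto simp: display_graph_def edges_def)
  obtain u where u: "F \<inter> edges T \<subseteq> Inc P u"
    using nice T by (auto simp: nice_cut_def legal_cut_def)
  have "phylo_tree T" using P T by (simp add: profile_def)
  moreover have "y \<in> C" if xy: "{x, y} \<in> edges T - F" "x \<in> C" for x y
  proof -
    have "{x, y} \<in> edges (display_graph P) - F" using xy edges_display_graph[OF T(1)] by blast
    moreover from this have "y \<in> verts (display_graph P)"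
      using wf_graph_Union_subset[OF wf_display_graph[OF P]] by blast
    ultimately show ?thesis using component_closed[OF C _ xy(2)] by blast
  qed
  moreover have "u \<in> f" if "f \<in> F \<inter> edges T" for f using u that by (auto simp: Inc_def)
  ultimately have "C \<inter> leaves T \<noteq> {}"
    using phylo_tree_closed_set_contains_leaf[of T F C u e] e T by blast
  then show ?thesis using T by (auto simp: labels_def)
qed

theorem lemma10:
  fixes P :: "'v graph set" and F :: "'v set set" and C1 C2 :: "'v set"
  assumes "profile P"
    and "connected_graph (verts (display_graph P)) (edges (display_graph P))"
    and "nice_cut P F"
    and "minimal_cut (display_graph P) F"
    and "component (verts (display_graph P)) (edges (display_graph P) - F) C1"
    and "component (verts (display_graph P)) (edges (display_graph P) - F) C2"
    and "C1 \<noteq> C2"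
  shows "is_split (labels P) (C1 \<inter> labels P) (C2 \<inter> labels P)"
proof -
  let ?V = "verts (display_graph P)" and ?E = "edges (display_graph P)"
  have mc: "minimal_cut (?V, ?E) F" using assms(4) by (simp add: verts_def edges_def)
  have "labels P \<subseteq> C1 \<union> C2"
  proof
    fix w assume "w \<in> labels P"
    then have w: "w \<in> ?V" by (auto simp: labels_def leaves_def display_graph_def verts_def)
    let ?Cw = "{x \<in> ?V. (w, x) \<in> (adj (?E - F))\<^sup>*}"
    have "?Cw = C1 \<or> ?Cw = C2"
      using minimal_cut_at_most_two_components[OF assms(2) wf_display_graph[OF assms(1)] mc
          assms(5,6) component_of[OF w] assms(7)] .
    then show "w \<in> C1 \<union> C2" using w by blast
  qed
  moreover have "C1 \<inter> C2 = {}" using component_unique[OF assms(5,6)] assms(7) by blast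
  ultimately show ?thesis
    using component_contains_label[OF assms(1,3)] assms(5,6) by (auto simp: is_split_def)
qed

end
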